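(* Consider the aggregative game of the context with a single deceptive player $d$ deceiving the set $\mathcal{D}\subset[N]\setminus\{d\}$, where $\alpha_{i,d}\neq0$ for all $i\in\mathcal{D}$, and assume $K_j>0$ for all $j\in[N]$. Define $$\delta^-=\max_{i\in\mathcal{D},\,\alpha_{i,d}>0}\Big(\frac{-\kappa_i}{\alpha_{i,d}}+\frac{1}{\alpha_{i,d}}\sum_{k\neq i}\frac{|\alpha_{i,k}+\alpha_{k,i}|}{2}\Big),\qquad \delta^+=\min_{i\in\mathcal{D},\,\alpha_{i,d}<0}\Big(\frac{-\kappa_i}{\alpha_{i,d}}+\frac{1}{\alpha_{i,d}}\sum_{k\neq i}\frac{|\alpha_{i,k}+\alpha_{k,i}|}{2}\Big).$$ Then for every $\delta$ in the interval $I$ below, the map $x\mapsto\gamma(x,\delta)$ is strongly monotone on $\mathbb{R}^N$: $I=(\delta^-,\infty)$ if $\alpha_{i,d}>0$ for all $i\in\mathcal{D}$; $I=(-\infty,\delta^+)$ if $\alpha_{i,d}<0$ for all $i\in\mathcal{D}$; and $I=(\delta^-,\delta^+)$ otherwise.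
   Context: Aggregative game: $J_i(x)=c_i(x_i)+l_i(x_{-i})x_i$ for $i\in[N]$, where $c_i:\mathbb{R}\to\mathbb{R}$ is twice differentiable with $c_i''\ge\kappa_i>0$ ($\kappa_i$-strongly convex) and $l_i(x_{-i})=\sum_{k\neq i}\alpha_{i,k}x_k$ with constants $\alpha_{i,k}\in\mathbb{R}$ ($\alpha_{k,k}:=0$); $x_{-i}$ is the vector of actions of players other than $i$. Pseudogradient $\mathcal{G}(x)$ has entries $\mathcal{G}_i(x)=c_i'(x_i)+l_i(x_{-i})$. $K_j=\kappa_j-\sum_{k\neq j}\frac{|\alpha_{j,k}+\alpha_{k,j}|}{2}$. With deceptive player $d$ and deceived set $\mathcal{D}$, $\Lambda$ is the $N\times N$ diagonal matrix with $(i,i)$ entry $\alpha_{i,d}$ if $i\in\mathcal{D}$ and $0$ otherwise, and $\gamma(x,\delta)=\mathcal{G}(x)+\delta\Lambda x$. A map $F:\mathbb{R}^N\to\mathbb{R}^N$ is strongly monotone if there is $\kappa>0$ with $(F(x)-F(y))^\top(x-y)\ge\kappa|x-y|^2$ for all $x,y$. *)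

theory Defs
  imports "HOL-Analysis.Analysis"
begin

text \<open>Players are indexed by a finite type 'n (so N = CARD('n)); actions x :: real^'n.
  c i is the cost of player i, alpha i k the coupling coefficients.\<close>

definition lfun :: "('n::finite \<Rightarrow> 'n \<Rightarrow> real) \<Rightarrow> 'n \<Rightarrow> real^'n \<Rightarrow> real" where
  "lfun \<alpha> i x = (\<Sum>k\<in>UNIV - {i}. \<alpha> i k * x $ k)"

definition pseudogradient ::
  "('n::finite \<Rightarrow> real \<Rightarrow> real) \<Rightarrow> ('n \<Rightarrow> 'n \<Rightarrow> real) \<Rightarrow> real^'n \<Rightarrow> real^'n" where
  "pseudogradient c \<alpha> x = (\<chi> i. deriv (c i) (x $ i) + lfun \<alpha> i x)"

definition Kconst :: "('n::finite \<Rightarrow> real) \<Rightarrow> ('n \<Rightarrow> 'n \<Rightarrow> real) \<Rightarrow> 'n \<Rightarrow> real" where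
  "Kconst \<kappa> \<alpha> j = \<kappa> j - (\<Sum>k\<in>UNIV - {j}. \<bar>\<alpha> j k + \<alpha> k j\<bar> / 2)"

definition Lambda :: "('n::finite \<Rightarrow> 'n \<Rightarrow> real) \<Rightarrow> 'n \<Rightarrow> 'n set \<Rightarrow> real^'n^'n" where
  "Lambda \<alpha> d D = (\<chi> i j. if i = j \<and> i \<in> D then \<alpha> i d else 0)"

definition gamma ::
  "('n::finite \<Rightarrow> real \<Rightarrow> real) \<Rightarrow> ('n \<Rightarrow> 'n \<Rightarrow> real) \<Rightarrow> 'n \<Rightarrow> 'n set \<Rightarrow> real^'n \<Rightarrow> real \<Rightarrow> real^'n" where
  "gamma c \<alpha> d D x \<delta> = pseudogradient c \<alpha> x + \<delta> *\<^sub>R (Lambda \<alpha> d D *v x)"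

definition strongly_monotone :: "(real^'n::finite \<Rightarrow> real^'n) \<Rightarrow> bool" where
  "strongly_monotone F \<longleftrightarrow>
     (\<exists>\<kappa>>0. \<forall>x y. (F x - F y) \<bullet> (x - y) \<ge> \<kappa> * (norm (x - y))\<^sup>2)"

definition thr :: "('n::finite \<Rightarrow> real) \<Rightarrow> ('n \<Rightarrow> 'n \<Rightarrow> real) \<Rightarrow> 'n \<Rightarrow> 'n \<Rightarrow> real" where
  "thr \<kappa> \<alpha> d i = - \<kappa> i / \<alpha> i d + (1 / \<alpha> i d) * (\<Sum>k\<in>UNIV - {i}. \<bar>\<alpha> i k + \<alpha> k i\<bar> / 2)"

definition delta_minus :: "('n::finite \<Rightarrow> real) \<Rightarrow> ('n \<Rightarrow> 'n \<Rightarrow> real) \<Rightarrow> 'n \<Rightarrow> 'n set \<Rightarrow> real" where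
  "delta_minus \<kappa> \<alpha> d D = Max (thr \<kappa> \<alpha> d ` {i\<in>D. \<alpha> i d > 0})"

definition delta_plus :: "('n::finite \<Rightarrow> real) \<Rightarrow> ('n \<Rightarrow> 'n \<Rightarrow> real) \<Rightarrow> 'n \<Rightarrow> 'n set \<Rightarrow> real" where
  "delta_plus \<kappa> \<alpha> d D = Min (thr \<kappa> \<alpha> d ` {i\<in>D. \<alpha> i d < 0})"

end

theory Submission
  imports Defs
begin

text \<open>Write \<open>\<gamma>(\<cdot>,\<delta>)\<close> as a separable part \<open>x \<mapsto> (g\<^sub>i(x\<^sub>i))\<^sub>i\<close> plus the linear coupling
  \<open>x \<mapsto> (\<Sum>\<^sub>k \<alpha>\<^sub>i\<^sub>k x\<^sub>k)\<^sub>i\<close>, where \<open>g\<^sub>i(t) = c\<^sub>i'(t) + \<delta> \<alpha>\<^sub>i\<^sub>d t\<close> for deceived \<open>i\<close>. Each \<open>g\<^sub>i\<close> is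
  strongly monotone with modulus \<open>\<kappa>\<^sub>i + \<delta> \<alpha>\<^sub>i\<^sub>d\<close> (resp. \<open>\<kappa>\<^sub>i\<close>), and by \<open>2|h\<^sub>i h\<^sub>k| \<le> h\<^sub>i\<^sup>2 + h\<^sub>k\<^sup>2\<close> the
  coupling costs at most \<open>\<Sum>\<^sub>i (\<Sum>\<^sub>k |\<alpha>\<^sub>i\<^sub>k + \<alpha>\<^sub>k\<^sub>i|/2) h\<^sub>i\<^sup>2\<close>. The whole map is therefore strongly
  monotone as soon as every modulus exceeds the corresponding row sum: for undeceived players
  this is \<open>K\<^sub>i > 0\<close>, for deceived ones it is exactly the constraint \<open>\<delta> \<in> I\<close>.\<close>

lemma strongly_monotone_scalar_if_deriv_ge:
  fixes g :: "real \<Rightarrow> real"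
  assumes diff: "\<And>x. g differentiable (at x)" and deriv_ge: "\<And>x. deriv g x \<ge> \<mu>"
  shows "\<mu> * (a - b)\<^sup>2 \<le> (g a - g b) * (a - b)"
proof -
  have increment_ge: "\<mu> * (v - u) \<le> g v - g u" if "u < v" for u v
  proof -
    have "\<And>x. DERIV g x :> deriv g x"
      using diff DERIV_deriv_iff_real_differentiable by blast
    then obtain z where "g v - g u = (v - u) * deriv g z"
      using MVT2[OF \<open>u < v\<close>, of g "deriv g"] by blast
    with deriv_ge[of z] \<open>u < v\<close> show ?thesis
      by (simp add: mult.commute mult_left_mono)
  qed
  consider "b < a" | "a = b" | "a < b" by linarith
  then show ?thesis
  proof cases
    case 1
    with increment_ge[OF 1] show ?thesis
      by (metis diff_gt_0_iff_gt less_eq_real_def mult.assoc mult_right_mono power2_eq_square)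
  next
    case 3
    with increment_ge[OF 3] have "\<mu> * (b - a) * (b - a) \<le> (g b - g a) * (b - a)"
      by (intro mult_right_mono) auto
    then show ?thesis by (simp add: power2_eq_square algebra_simps)
  qed simp
qed

lemma quadratic_form_ge_neg_sym_row_sums:
  fixes a :: "'i \<Rightarrow> 'i \<Rightarrow> real" and h :: "'i \<Rightarrow> real"
  assumes "finite S"
  shows "- (\<Sum>i\<in>S. (\<Sum>k\<in>S. \<bar>a i k + a k i\<bar> / 2) * (h i)\<^sup>2) \<le> (\<Sum>i\<in>S. \<Sum>k\<in>S. a i k * h i * h k)"
proof -
  define b where "b i k = \<bar>a i k + a k i\<bar> / 2" for i k
  have b_sym: "b i k = b k i" for i k by (simp add: b_def add.commute)
  have pointwise: "- (b i k * (h i)\<^sup>2 + b i k * (h k)\<^sup>2) \<le> (a i k + a k i) * h i * h k" for i k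
  proof -
    have "2 * \<bar>h i * h k\<bar> \<le> (h i)\<^sup>2 + (h k)\<^sup>2"
      using sum_squares_bound[of "\<bar>h i\<bar>" "\<bar>h k\<bar>"] by (simp add: abs_mult)
    then have "\<bar>a i k + a k i\<bar> * (2 * \<bar>h i * h k\<bar>) \<le> \<bar>a i k + a k i\<bar> * ((h i)\<^sup>2 + (h k)\<^sup>2)"
      by (intro mult_left_mono) auto
    moreover have "- (\<bar>a i k + a k i\<bar> * \<bar>h i * h k\<bar>) \<le> (a i k + a k i) * h i * h k"
      by (metis abs_ge_minus_self abs_mult minus_le_iff mult.assoc)
    ultimately show ?thesis by (simp add: b_def algebra_simps)
  qed
  have swap_b: "(\<Sum>i\<in>S. \<Sum>k\<in>S. b i k * (h k)\<^sup>2) = (\<Sum>i\<in>S. \<Sum>k\<in>S. b i k * (h i)\<^sup>2)"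
    by (subst sum.swap) (simp add: b_sym)
  have swap_a: "(\<Sum>i\<in>S. \<Sum>k\<in>S. a k i * h i * h k) = (\<Sum>i\<in>S. \<Sum>k\<in>S. a i k * h i * h k)"
    by (subst sum.swap) (simp only: mult.commute mult.left_commute)
  have "- 2 * (\<Sum>i\<in>S. \<Sum>k\<in>S. b i k * (h i)\<^sup>2)
      = (\<Sum>i\<in>S. \<Sum>k\<in>S. - (b i k * (h i)\<^sup>2 + b i k * (h k)\<^sup>2))"
    by (simp only: sum_negf sum.distrib swap_b)
  also have "\<dots> \<le> (\<Sum>i\<in>S. \<Sum>k\<in>S. (a i k + a k i) * h i * h k)"
    by (intro sum_mono pointwise)
  also have "\<dots> = 2 * (\<Sum>i\<in>S. \<Sum>k\<in>S. a i k * h i * h k)"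
    by (simp only: distrib_right sum.distrib swap_a mult_2)
  finally have "- (\<Sum>i\<in>S. \<Sum>k\<in>S. b i k * (h i)\<^sup>2) \<le> (\<Sum>i\<in>S. \<Sum>k\<in>S. a i k * h i * h k)"
    by linarith
  then show ?thesis by (simp add: b_def sum_distrib_right)
qed

lemma strongly_monotone_separable_plus_linear:
  fixes g :: "'n::finite \<Rightarrow> real \<Rightarrow> real" and A :: "'n \<Rightarrow> 'n \<Rightarrow> real" and \<mu> :: "'n \<Rightarrow> real"
  assumes g_mono: "\<And>i a b. \<mu> i * (a - b)\<^sup>2 \<le> (g i a - g i b) * (a - b)"
    and dominant: "\<And>i. (\<Sum>k\<in>UNIV. \<bar>A i k + A k i\<bar> / 2) < \<mu> i"
  shows "strongly_monotone (\<lambda>x. \<chi> i. g i (x $ i) + (\<Sum>k\<in>UNIV. A i k * x $ k))"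
proof -
  define e where "e i = \<mu> i - (\<Sum>k\<in>UNIV. \<bar>A i k + A k i\<bar> / 2)" for i
  define m where "m = Min (range e)"
  have "m > 0" using dominant by (simp add: m_def e_def)
  have m_le: "m \<le> e i" for i by (simp add: m_def)
  show ?thesis
    unfolding strongly_monotone_def
  proof (intro exI[of _ m] conjI allI \<open>m > 0\<close>)
    fix x y :: "real^'n"
    define h where "h i = x $ i - y $ i" for i
    let ?F = "\<lambda>x. \<chi> i. g i (x $ i) + (\<Sum>k\<in>UNIV. A i k * x $ k)"
    have "m * (norm (x - y))\<^sup>2 = (\<Sum>i\<in>UNIV. m * (h i)\<^sup>2)"
      by (simp add: norm_vec_def L2_set_def sum_distrib_left h_def sum_nonneg)
    also have "\<dots> \<le> (\<Sum>i\<in>UNIV. e i * (h i)\<^sup>2)"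
      by (intro sum_mono mult_right_mono m_le) auto
    also have "\<dots> = (\<Sum>i\<in>UNIV. \<mu> i * (h i)\<^sup>2)
        - (\<Sum>i\<in>UNIV. (\<Sum>k\<in>UNIV. \<bar>A i k + A k i\<bar> / 2) * (h i)\<^sup>2)"
      by (simp add: e_def left_diff_distrib sum_subtractf)
    also have "\<dots> \<le> (\<Sum>i\<in>UNIV. (g i (x $ i) - g i (y $ i)) * h i)
        + (\<Sum>i\<in>UNIV. \<Sum>k\<in>UNIV. A i k * h i * h k)"
    proof -
      have "(\<Sum>i\<in>UNIV. \<mu> i * (h i)\<^sup>2) \<le> (\<Sum>i\<in>UNIV. (g i (x $ i) - g i (y $ i)) * h i)"
        unfolding h_def by (intro sum_mono g_mono)
      with quadratic_form_ge_neg_sym_row_sums[of UNIV A h] show ?thesis by simp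
    qed
    also have "\<dots> = (\<Sum>i\<in>UNIV. (g i (x $ i) - g i (y $ i) + (\<Sum>k\<in>UNIV. A i k * h k)) * h i)"
    proof -
      have "(\<Sum>i\<in>UNIV. \<Sum>k\<in>UNIV. A i k * h i * h k) = (\<Sum>i\<in>UNIV. (\<Sum>k\<in>UNIV. A i k * h k) * h i)"
        by (simp add: sum_distrib_right) (intro sum.cong refl, simp add: mult_ac)
      then show ?thesis by (simp add: distrib_right sum.distrib)
    qed
    also have "\<dots> = (?F x - ?F y) \<bullet> (x - y)"
    proof -
      have component: "(?F x - ?F y) $ i = g i (x $ i) - g i (y $ i) + (\<Sum>k\<in>UNIV. A i k * h k)" for i
        by (simp add: h_def right_diff_distrib sum_subtractf)
      have "(x - y) $ i = h i" for i by (simp add: h_def)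
      then show ?thesis unfolding inner_vec_def component by simp
    qed
    finally show "m * (norm (x - y))\<^sup>2 \<le> (?F x - ?F y) \<bullet> (x - y)" .
  qed
qed

lemma deceived_row_sum_lt:
  assumes iD: "i \<in> D" and nonzero: "\<alpha> i d \<noteq> 0"
    and hdelta:
      "if (\<forall>i\<in>D. \<alpha> i d > 0) then \<delta> > delta_minus \<kappa> \<alpha> d D
       else if (\<forall>i\<in>D. \<alpha> i d < 0) then \<delta> < delta_plus \<kappa> \<alpha> d D
       else delta_minus \<kappa> \<alpha> d D < \<delta> \<and> \<delta> < delta_plus \<kappa> \<alpha> d D"
  shows "(\<Sum>k\<in>UNIV - {i}. \<bar>\<alpha> i k + \<alpha> k i\<bar> / 2) < \<kappa> i + \<delta> * \<alpha> i d"
proof -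
  define s where "s = (\<Sum>k\<in>UNIV - {i}. \<bar>\<alpha> i k + \<alpha> k i\<bar> / 2)"
  have thr: "thr \<kappa> \<alpha> d i = (s - \<kappa> i) / \<alpha> i d"
    by (simp add: thr_def s_def diff_divide_distrib)
  consider "\<alpha> i d > 0" | "\<alpha> i d < 0" using nonzero by linarith
  then show ?thesis
  proof cases
    case 1
    have "thr \<kappa> \<alpha> d i \<le> delta_minus \<kappa> \<alpha> d D"
      unfolding delta_minus_def using iD 1 by (intro Max_ge) auto
    moreover have "delta_minus \<kappa> \<alpha> d D < \<delta>"
      using hdelta iD 1 by (auto split: if_splits)
    ultimately have "(s - \<kappa> i) / \<alpha> i d < \<delta>" by (simp add: thr)
    with 1 show ?thesis by (simp add: s_def pos_divide_less_eq)
  next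
    case 2
    have "delta_plus \<kappa> \<alpha> d D \<le> thr \<kappa> \<alpha> d i"
      unfolding delta_plus_def using iD 2 by (intro Min_le) auto
    moreover have "\<delta> < delta_plus \<kappa> \<alpha> d D"
      using hdelta iD 2 by (auto split: if_splits)
    ultimately have "\<delta> < (s - \<kappa> i) / \<alpha> i d" by (simp add: thr)
    with 2 show ?thesis by (simp add: s_def neg_less_divide_eq)
  qed
qed

lemma gamma_eq_separable_plus_linear:
  assumes "\<And>k. \<alpha> k k = 0"
  shows "gamma c \<alpha> d D x \<delta> =
    (\<chi> i. (deriv (c i) (x $ i) + (if i \<in> D then \<delta> * \<alpha> i d else 0) * x $ i)
          + (\<Sum>k\<in>UNIV. \<alpha> i k * x $ k))"
proof -
  have "lfun \<alpha> i x = (\<Sum>k\<in>UNIV. \<alpha> i k * x $ k)" for i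
    unfolding lfun_def using sum.remove[of UNIV i "\<lambda>k. \<alpha> i k * x $ k"] by (simp add: assms)
  moreover have "(Lambda \<alpha> d D *v x) $ i = (if i \<in> D then \<alpha> i d * x $ i else 0)" for i
    unfolding Lambda_def matrix_vector_mult_def
    by (cases "i \<in> D") (simp_all add: if_distrib[where f="\<lambda>t. t * _"] cong: if_cong)
  ultimately show ?thesis
    by (simp add: gamma_def pseudogradient_def vec_eq_iff)
qed

theorem lemma4:
  fixes c :: "'n::finite \<Rightarrow> real \<Rightarrow> real"
    and \<kappa> :: "'n \<Rightarrow> real"
    and \<alpha> :: "'n \<Rightarrow> 'n \<Rightarrow> real"
    and d :: 'n and D :: "'n set" and \<delta> :: real
  assumes diff1: "\<And>i x. c i differentiable (at x)"
    and diff2: "\<And>i x. deriv (c i) differentiable (at x)"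
    and sconv: "\<And>i x. deriv (deriv (c i)) x \<ge> \<kappa> i"
    and kpos: "\<And>i. \<kappa> i > 0"
    and adiag: "\<And>k. \<alpha> k k = 0"
    and Dsub: "D \<subseteq> UNIV - {d}" and Dne: "D \<noteq> {}"
    and anz: "\<And>i. i \<in> D \<Longrightarrow> \<alpha> i d \<noteq> 0"
    and Kpos: "\<And>j. Kconst \<kappa> \<alpha> j > 0"
    and hdelta:
      "if (\<forall>i\<in>D. \<alpha> i d > 0) then \<delta> > delta_minus \<kappa> \<alpha> d D
       else if (\<forall>i\<in>D. \<alpha> i d < 0) then \<delta> < delta_plus \<kappa> \<alpha> d D
       else delta_minus \<kappa> \<alpha> d D < \<delta> \<and> \<delta> < delta_plus \<kappa> \<alpha> d D"
  shows "strongly_monotone (\<lambda>x. gamma c \<alpha> d D x \<delta>)"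
proof -
  define \<beta> where "\<beta> i = (if i \<in> D then \<delta> * \<alpha> i d else 0)" for i
  have row_sum: "(\<Sum>k\<in>UNIV. \<bar>\<alpha> i k + \<alpha> k i\<bar> / 2) = (\<Sum>k\<in>UNIV - {i}. \<bar>\<alpha> i k + \<alpha> k i\<bar> / 2)" for i
    by (subst sum.remove[of UNIV i]) (auto simp: adiag)
  have "strongly_monotone (\<lambda>x. \<chi> i. (deriv (c i) (x $ i) + \<beta> i * x $ i) + (\<Sum>k\<in>UNIV. \<alpha> i k * x $ k))"
  proof (rule strongly_monotone_separable_plus_linear[where \<mu> = "\<lambda>i. \<kappa> i + \<beta> i"])
    show "(\<kappa> i + \<beta> i) * (a - b)\<^sup>2 \<le> (deriv (c i) a + \<beta> i * a - (deriv (c i) b + \<beta> i * b)) * (a - b)"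
      for i a b
      using strongly_monotone_scalar_if_deriv_ge[OF diff2 sconv, of i a b]
      by (simp add: power2_eq_square algebra_simps)
    show "(\<Sum>k\<in>UNIV. \<bar>\<alpha> i k + \<alpha> k i\<bar> / 2) < \<kappa> i + \<beta> i" for i
    proof (cases "i \<in> D")
      case True
      then show ?thesis
        using deceived_row_sum_lt[OF True anz[OF True] hdelta] by (simp add: \<beta>_def row_sum)
    next
      case False
      then show ?thesis using Kpos[of i] by (simp add: \<beta>_def row_sum Kconst_def)
    qed
  qed
  then show ?thesis
    by (simp add: gamma_eq_separable_plus_linear[OF adiag] \<beta>_def)
qed

end
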